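(* Let $G$ be a finite subgroup of $O(d)$ and $p\ge1$ an integer such that every $G$-invariant homogeneous polynomial of degree $2p$ on $\mathbb{R}^d$ is a scalar multiple of $|x|^{2p}$. Then there is a homogeneous symmetric polynomial $F_p$ of degree $p$ in $d$ variables such that for every real matrix $T$ with $d$ columns (possibly rectangular) and every $x\in\mathbb{R}^d$, $$\frac{1}{|G|}\sum_{U\in G}|TUx|^{2p}=F_p(s^2(T))\,|x|^{2p},$$ where $s^2(T)$ denotes the multiset of eigenvalues of $T^\dagger T$ (squares of the singular values of $T$).
   Context: $T^\dagger$ is the transpose of $T$. *)

theory Defs
  imports "HOL-Analysis.Analysis"
begin

definition homog_poly :: "nat \<Rightarrow> (real^'d \<Rightarrow> real) \<Rightarrow> bool" where
  "homog_poly k f \<longleftrightarrow>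
     (\<exists>c :: ('d \<Rightarrow> nat) \<Rightarrow> real.
        \<forall>x. f x = (\<Sum>\<alpha> \<in> {\<alpha>. sum \<alpha> UNIV = k}. c \<alpha> * (\<Prod>i\<in>UNIV. (x $ i) ^ \<alpha> i)))"

definition symmetric_fun :: "(real^'d \<Rightarrow> real) \<Rightarrow> bool" where
  "symmetric_fun F \<longleftrightarrow> (\<forall>\<sigma> v. \<sigma> permutes (UNIV :: 'd set) \<longrightarrow> F (\<chi> i. v $ \<sigma> i) = F v)"

definition finite_orth_group :: "(real^'d^'d) set \<Rightarrow> bool" where
  "finite_orth_group G \<longleftrightarrow> finite G \<and> (\<forall>U\<in>G. orthogonal_matrix U) \<and> mat 1 \<in> G
     \<and> (\<forall>U\<in>G. \<forall>V\<in>G. U ** V \<in> G) \<and> (\<forall>U\<in>G. transpose U \<in> G)"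

text \<open>A real n x d matrix T is given by its rows T 0, ..., T (n-1) in R^d.
  rect_norm n T y is the Euclidean norm of T y in R^n.\<close>
definition rect_norm :: "nat \<Rightarrow> (nat \<Rightarrow> real^'d) \<Rightarrow> real^'d \<Rightarrow> real" where
  "rect_norm n T y = sqrt (\<Sum>k<n. (T k \<bullet> y)\<^sup>2)"

definition gram :: "nat \<Rightarrow> (nat \<Rightarrow> real^'d) \<Rightarrow> real^'d^'d" where
  "gram n T = (\<chi> i j. \<Sum>k<n. T k $ i * T k $ j)"

text \<open>lam lists the eigenvalues of A with (algebraic) multiplicity, i.e. the
  characteristic polynomial of A is the product of (t - lam_i).\<close>
definition is_eigenvalue_list :: "real^'d^'d \<Rightarrow> real^'d \<Rightarrow> bool" where
  "is_eigenvalue_list A lam \<longleftrightarrow>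
     (\<forall>t. det (t *\<^sub>R mat 1 - A) = (\<Prod>i\<in>UNIV. t - lam $ i))"

end

theory Submission
  imports Defs "HOL-Computational_Algebra.Polynomial"
begin

text \<open>Averaging \<open>(y \<bullet> U x)\<^sup>2\<^sup>p\<close> over \<open>G\<close> gives an invariant form of degree \<open>2p\<close>, hence
  \<open>c(y) \<parallel>x\<parallel>\<^sup>2\<^sup>p\<close>, and the symmetry \<open>U \<mapsto> U\<^sup>T\<close> of \<open>G\<close> forces \<open>c(y) = \<kappa> \<parallel>y\<parallel>\<^sup>2\<^sup>p\<close>.
  So this average is unchanged when \<open>y\<close> is rotated, and by polarization the same holds for the
  average of any product of \<open>2p\<close> linear forms \<open>y\<^sub>j \<bullet> U x\<close>.
  Diagonalizing \<open>T\<^sup>\<dagger>T = V diag(\<mu>) V\<^sup>T\<close> writes \<open>\<parallel>T U x\<parallel>\<^sup>2 = \<Sum>\<^sub>i \<mu>\<^sub>i (V e\<^sub>i \<bullet> U x)\<^sup>2\<close>;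
  expanding the \<open>p\<close>-th power and removing \<open>V\<close> leaves \<open>\<Sum>\<^sub>U (\<Sum>\<^sub>i \<mu>\<^sub>i (U x)\<^sub>i\<^sup>2)\<^sup>p\<close>, which is again
  radial in \<open>x\<close> and defines \<open>F\<^sub>p(\<mu>)\<close>. Rotating by permutation matrices shows that \<open>F\<^sub>p\<close> is
  symmetric, so it depends only on the eigenvalues.\<close>

section \<open>Homogeneous polynomials\<close>

definition vec_monomial :: "('d \<Rightarrow> nat) \<Rightarrow> real^'d \<Rightarrow> real" where
  "vec_monomial \<alpha> x = (\<Prod>i\<in>UNIV. (x $ i) ^ \<alpha> i)"

lemma finite_exponents_of_degree: "finite {\<alpha>::'d::finite \<Rightarrow> nat. sum \<alpha> UNIV = k}"
proof (rule finite_subset[OF _ finite_PiE[of UNIV "\<lambda>_. {..k}"]])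
  show "{\<alpha>::'d::finite \<Rightarrow> nat. sum \<alpha> UNIV = k} \<subseteq> PiE UNIV (\<lambda>_. {..k})"
    by (auto simp: PiE_def extensional_def intro!: member_le_sum)
qed auto

lemma homog_poly_iff_monomials:
  "homog_poly k f \<longleftrightarrow>
     (\<exists>c. \<forall>x. f x = (\<Sum>\<alpha>\<in>{\<alpha>. sum \<alpha> UNIV = k}. c \<alpha> * vec_monomial \<alpha> x))"
  unfolding homog_poly_def vec_monomial_def by simp

lemma homog_poly_zero: "homog_poly k (\<lambda>x. 0)"
  unfolding homog_poly_iff_monomials by (rule exI[of _ "\<lambda>_. 0"]) simp

lemma homog_poly_add:
  assumes "homog_poly k f" "homog_poly k g"
  shows "homog_poly k (\<lambda>x. f x + g x)"
proof -
  obtain c where "\<And>x. f x = (\<Sum>\<alpha>\<in>{\<alpha>. sum \<alpha> UNIV = k}. c \<alpha> * vec_monomial \<alpha> x)"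
    using assms(1) unfolding homog_poly_iff_monomials by blast
  moreover obtain d where "\<And>x. g x = (\<Sum>\<alpha>\<in>{\<alpha>. sum \<alpha> UNIV = k}. d \<alpha> * vec_monomial \<alpha> x)"
    using assms(2) unfolding homog_poly_iff_monomials by blast
  ultimately show ?thesis unfolding homog_poly_iff_monomials
    by (intro exI[of _ "\<lambda>\<alpha>. c \<alpha> + d \<alpha>"]) (simp add: sum.distrib distrib_right)
qed

lemma homog_poly_cmult:
  assumes "homog_poly k f"
  shows "homog_poly k (\<lambda>x. a * f x)"
proof -
  obtain c where "\<And>x. f x = (\<Sum>\<alpha>\<in>{\<alpha>. sum \<alpha> UNIV = k}. c \<alpha> * vec_monomial \<alpha> x)"
    using assms unfolding homog_poly_iff_monomials by blast
  then show ?thesis unfolding homog_poly_iff_monomials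
    by (intro exI[of _ "\<lambda>\<alpha>. a * c \<alpha>"]) (simp add: sum_distrib_left mult.assoc)
qed

lemma homog_poly_sum:
  assumes "finite S" "\<And>s. s \<in> S \<Longrightarrow> homog_poly k (f s)"
  shows "homog_poly k (\<lambda>x. \<Sum>s\<in>S. f s x)"
  using assms by (induction S rule: finite_induct) (auto intro: homog_poly_zero homog_poly_add)

lemma homog_poly_const: "homog_poly 0 (\<lambda>x::real^'d. a)"
proof -
  have "{\<alpha>::'d\<Rightarrow>nat. sum \<alpha> UNIV = 0} = {\<lambda>_. 0}"
    by (rule set_eqI) (simp add: fun_eq_iff sum_eq_0_iff)
  then show ?thesis unfolding homog_poly_iff_monomials
    by (auto simp: vec_monomial_def intro!: exI[of _ "\<lambda>_. a"])
qed

lemma homog_poly_component: "homog_poly 1 (\<lambda>x::real^'d. x $ i)"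
  unfolding homog_poly_iff_monomials
proof (intro exI allI)
  let ?e = "\<lambda>j. if j = i then 1 else (0::nat)"
  fix x :: "real^'d"
  have "?e \<in> {\<alpha>::'d\<Rightarrow>nat. sum \<alpha> UNIV = 1}" by (simp add: sum.delta)
  then have "(\<Sum>\<alpha>\<in>{\<alpha>::'d\<Rightarrow>nat. sum \<alpha> UNIV = 1}. if \<alpha> = ?e then vec_monomial \<alpha> x else 0)
      = vec_monomial ?e x"
    using finite_exponents_of_degree[where 'd='d and k=1] by (simp only: sum.delta) simp
  also have "vec_monomial ?e x = x $ i"
    unfolding vec_monomial_def by (simp add: if_distrib prod.delta cong: if_cong)
  finally show "x $ i = (\<Sum>\<alpha>\<in>{\<alpha>. sum \<alpha> UNIV = 1}. (if \<alpha> = ?e then 1 else 0) * vec_monomial \<alpha> x)"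
    by (simp add: if_distrib[of "\<lambda>c. c * _"] cong: if_cong)
qed

lemma homog_poly_mult:
  assumes "homog_poly k f" "homog_poly l g"
  shows "homog_poly (k + l) (\<lambda>x. f x * g x)"
proof -
  let ?K = "{\<alpha>::'d\<Rightarrow>nat. sum \<alpha> UNIV = k}" and ?L = "{\<alpha>::'d\<Rightarrow>nat. sum \<alpha> UNIV = l}"
    and ?M = "{\<alpha>::'d\<Rightarrow>nat. sum \<alpha> UNIV = k + l}"
  obtain c where c: "\<And>x. f x = (\<Sum>\<alpha>\<in>?K. c \<alpha> * vec_monomial \<alpha> x)"
    using assms(1) unfolding homog_poly_iff_monomials by blast
  obtain d where d: "\<And>x. g x = (\<Sum>\<alpha>\<in>?L. d \<alpha> * vec_monomial \<alpha> x)"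
    using assms(2) unfolding homog_poly_iff_monomials by blast
  let ?plus = "\<lambda>q::('d\<Rightarrow>nat)\<times>('d\<Rightarrow>nat). \<lambda>i. fst q i + snd q i"
  define e where "e \<gamma> = (\<Sum>q\<in>{q \<in> ?K \<times> ?L. ?plus q = \<gamma>}. c (fst q) * d (snd q))" for \<gamma>
  have monomial_mult: "vec_monomial (\<lambda>i. a i + b i) x = vec_monomial a x * vec_monomial b x"
    for a b and x :: "real^'d"
    unfolding vec_monomial_def by (simp add: power_add prod.distrib)
  have "f x * g x = (\<Sum>\<gamma>\<in>?M. e \<gamma> * vec_monomial \<gamma> x)" for x
  proof -
    have "f x * g x = (\<Sum>q\<in>?K \<times> ?L. c (fst q) * d (snd q) * vec_monomial (?plus q) x)"
      unfolding c d sum_product sum.cartesian_product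
      by (rule sum.cong) (auto simp: monomial_mult)
    also have "\<dots> = (\<Sum>\<gamma>\<in>?M. \<Sum>q\<in>{q \<in> ?K \<times> ?L. ?plus q = \<gamma>}.
                        c (fst q) * d (snd q) * vec_monomial (?plus q) x)"
      by (rule sum.group[symmetric]) (auto simp: finite_exponents_of_degree sum.distrib)
    also have "\<dots> = (\<Sum>\<gamma>\<in>?M. e \<gamma> * vec_monomial \<gamma> x)"
      unfolding e_def sum_distrib_right by (intro sum.cong refl) auto
    finally show ?thesis .
  qed
  then show ?thesis unfolding homog_poly_iff_monomials by blast
qed

lemma homog_poly_prod:
  assumes "finite S" "\<And>s. s \<in> S \<Longrightarrow> homog_poly (k s) (f s)"
  shows "homog_poly (\<Sum>s\<in>S. k s) (\<lambda>x. \<Prod>s\<in>S. f s x)"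
  using assms
proof (induction S rule: finite_induct)
  case empty
  then show ?case using homog_poly_const[of 1] by simp
next
  case (insert s S)
  then show ?case using homog_poly_mult[of "k s" "f s" "sum k S" "\<lambda>x. \<Prod>s\<in>S. f s x"] by simp
qed

lemma homog_poly_power:
  assumes "homog_poly k f"
  shows "homog_poly (k * m) (\<lambda>x. f x ^ m)"
  using homog_poly_prod[of "{..<m}" "\<lambda>_. k" "\<lambda>_. f"] assms by (simp add: mult.commute)

lemma homog_poly_inner: "homog_poly 1 (\<lambda>x::real^'d. a \<bullet> x)"
proof -
  have "homog_poly 1 (\<lambda>x::real^'d. \<Sum>i\<in>UNIV. a $ i * x $ i)"
    by (intro homog_poly_sum homog_poly_cmult homog_poly_component) simp
  then show ?thesis by (simp add: inner_vec_def)
qed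

lemma homog_poly_compose_matrix:
  assumes "homog_poly k f"
  shows "homog_poly k (\<lambda>x. f (M *v x))"
proof -
  obtain c where c: "\<And>x. f x = (\<Sum>\<alpha>\<in>{\<alpha>. sum \<alpha> UNIV = k}. c \<alpha> * vec_monomial \<alpha> x)"
    using assms unfolding homog_poly_iff_monomials by blast
  have "homog_poly k (\<lambda>x. vec_monomial \<alpha> (M *v x))" if "sum \<alpha> UNIV = k" for \<alpha>
  proof -
    have "homog_poly (\<Sum>i\<in>UNIV. 1 * \<alpha> i) (\<lambda>x. \<Prod>i\<in>UNIV. (M $ i \<bullet> x) ^ \<alpha> i)"
      by (intro homog_poly_prod homog_poly_power homog_poly_inner) simp
    then show ?thesis using that by (simp add: vec_monomial_def matrix_vector_mul_component)
  qed
  then have "homog_poly k (\<lambda>x. \<Sum>\<alpha>\<in>{\<alpha>. sum \<alpha> UNIV = k}. c \<alpha> * vec_monomial \<alpha> (M *v x))"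
    by (intro homog_poly_sum homog_poly_cmult) (auto simp: finite_exponents_of_degree)
  then show ?thesis by (simp add: c)
qed

section \<open>Polarization\<close>

lemma sum_binomial_expansion:
  fixes P a b :: "'u \<Rightarrow> real"
  shows "(\<Sum>u\<in>S. P u * (a u + t * b u) ^ N) =
    (\<Sum>i\<le>N. (of_nat (N choose i) * (\<Sum>u\<in>S. P u * b u ^ i * a u ^ (N - i))) * t ^ i)"
proof -
  have "(\<Sum>u\<in>S. P u * (a u + t * b u) ^ N) =
        (\<Sum>u\<in>S. \<Sum>i\<le>N. P u * (of_nat (N choose i) * (t * b u) ^ i * a u ^ (N - i)))"
    by (simp add: binomial_ring[of "t * b _"] add.commute[of "a _"] sum_distrib_left)
  also have "\<dots> = (\<Sum>i\<le>N. \<Sum>u\<in>S. P u * (of_nat (N choose i) * (t * b u) ^ i * a u ^ (N - i)))"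
    by (rule sum.swap)
  also have "\<dots> = (\<Sum>i\<le>N. (of_nat (N choose i) * (\<Sum>u\<in>S. P u * b u ^ i * a u ^ (N - i))) * t ^ i)"
    by (intro sum.cong refl)
       (simp add: sum_distrib_left sum_distrib_right power_mult_distrib algebra_simps)
  finally show ?thesis .
qed

text \<open>Induction on the number of factors: two factors \<open>v\<^sub>k, v\<^sub>k\<^sub>+\<^sub>1\<close> are merged into the single
  form \<open>v\<^sub>k + t v\<^sub>k\<^sub>+\<^sub>1\<close>, and comparing the coefficients of the two resulting polynomials in \<open>t\<close>
  recovers the original product.\<close>
lemma sum_prod_linear_forms_transform:
  fixes V :: "real^'d^'d" and z :: "'u \<Rightarrow> real^'d" and m :: nat
  assumes powers: "\<And>y. (\<Sum>u\<in>S. ((V *v y) \<bullet> z u) ^ N) = (\<Sum>u\<in>S. (y \<bullet> z u) ^ N)"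
    and degree: "(\<Sum>j<m. e j) = N"
  shows "(\<Sum>u\<in>S. \<Prod>j<m. ((V *v v j) \<bullet> z u) ^ e j) = (\<Sum>u\<in>S. \<Prod>j<m. (v j \<bullet> z u) ^ e j)"
  using degree
proof (induction m arbitrary: v e rule: less_induct)
  case (less m)
  consider "m = 0" | "m = 1" | k where "m = Suc (Suc k)"
    by (metis One_nat_def not0_implies_Suc)
  then show ?case
  proof cases
    case 1
    then show ?thesis by simp
  next
    case 2
    then show ?thesis using less.prems powers by simp
  next
    case 3
    let ?N = "e k + e (Suc k)"
    let ?P = "\<lambda>u. \<Prod>j<k. (v j \<bullet> z u) ^ e j"
      and ?P' = "\<lambda>u. \<Prod>j<k. ((V *v v j) \<bullet> z u) ^ e j"
    let ?a = "\<lambda>u. v k \<bullet> z u" and ?b = "\<lambda>u. v (Suc k) \<bullet> z u"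
    let ?a' = "\<lambda>u. (V *v v k) \<bullet> z u" and ?b' = "\<lambda>u. (V *v v (Suc k)) \<bullet> z u"
    have merged: "(\<Sum>u\<in>S. ?P' u * (?a' u + t * ?b' u) ^ ?N) = (\<Sum>u\<in>S. ?P u * (?a u + t * ?b u) ^ ?N)"
      for t
    proof -
      define w where "w = v(k := v k + t *\<^sub>R v (Suc k))"
      define e' where "e' = e(k := ?N)"
      have "(\<Sum>j<Suc k. e' j) = N" using less.prems 3 by (simp add: e'_def)
      then have "(\<Sum>u\<in>S. \<Prod>j<Suc k. ((V *v w j) \<bullet> z u) ^ e' j)
          = (\<Sum>u\<in>S. \<Prod>j<Suc k. (w j \<bullet> z u) ^ e' j)"
        using less.IH[of "Suc k" e' w] 3 by simp
      then show ?thesis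
        by (simp add: w_def e'_def matrix_vector_right_distrib inner_add_left
            matrix_vector_mult_scaleR)
    qed
    let ?c = "\<lambda>P a b i. of_nat (?N choose i) * (\<Sum>u\<in>S. P u * b u ^ i * a u ^ (?N - i))"
    have "\<forall>t. (\<Sum>i\<le>?N. ?c ?P' ?a' ?b' i * t ^ i) = (\<Sum>i\<le>?N. ?c ?P ?a ?b i * t ^ i)"
      using merged by (simp add: sum_binomial_expansion)
    then have "\<forall>i\<le>?N. ?c ?P' ?a' ?b' i = ?c ?P ?a ?b i"
      unfolding polyfun_eq_coeffs .
    from this[rule_format, of "e (Suc k)"] have "(\<Sum>u\<in>S. ?P' u * ?b' u ^ e (Suc k) * ?a' u ^ e k)
        = (\<Sum>u\<in>S. ?P u * ?b u ^ e (Suc k) * ?a u ^ e k)"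
      by simp
    then show ?thesis using 3 by (simp add: ac_simps)
  qed
qed

lemma sum_power_weighted_squares_transform:
  fixes V :: "real^'d^'d" and z :: "'u \<Rightarrow> real^'d" and w :: "'k \<Rightarrow> real^'d"
  assumes powers: "\<And>y. (\<Sum>u\<in>S. ((V *v y) \<bullet> z u) ^ (2 * p)) = (\<Sum>u\<in>S. (y \<bullet> z u) ^ (2 * p))"
    and "finite K"
  shows "(\<Sum>u\<in>S. (\<Sum>k\<in>K. s k * ((V *v w k) \<bullet> z u)\<^sup>2) ^ p)
       = (\<Sum>u\<in>S. (\<Sum>k\<in>K. s k * (w k \<bullet> z u)\<^sup>2) ^ p)"
proof -
  have expand: "(\<Sum>u\<in>S. (\<Sum>k\<in>K. s k * (w' k \<bullet> z u)\<^sup>2) ^ p) =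
     (\<Sum>g\<in>PiE {..<p} (\<lambda>_. K). (\<Prod>j<p. s (g j)) * (\<Sum>u\<in>S. \<Prod>j<p. (w' (g j) \<bullet> z u) ^ 2))"
    for w' :: "'k \<Rightarrow> real^'d"
  proof -
    have "(\<Sum>u\<in>S. (\<Sum>k\<in>K. s k * (w' k \<bullet> z u)\<^sup>2) ^ p) =
          (\<Sum>u\<in>S. \<Sum>g\<in>PiE {..<p} (\<lambda>_. K). (\<Prod>j<p. s (g j)) * (\<Prod>j<p. (w' (g j) \<bullet> z u) ^ 2))"
      using prod_sum_PiE[of "{..<p}" "\<lambda>_. K" "\<lambda>_ k. s k * (w' k \<bullet> z _)\<^sup>2"] \<open>finite K\<close>
      by (simp add: prod.distrib)
    also have "\<dots> = (\<Sum>g\<in>PiE {..<p} (\<lambda>_. K). (\<Prod>j<p. s (g j)) * (\<Sum>u\<in>S. \<Prod>j<p. (w' (g j) \<bullet> z u) ^ 2))"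
      by (subst sum.swap) (simp add: sum_distrib_left)
    finally show ?thesis .
  qed
  have "(\<Sum>u\<in>S. \<Prod>j<p. ((V *v w (g j)) \<bullet> z u) ^ 2) = (\<Sum>u\<in>S. \<Prod>j<p. (w (g j) \<bullet> z u) ^ 2)" for g
    using sum_prod_linear_forms_transform[where m = p and e = "\<lambda>_. 2" and v = "\<lambda>j. w (g j)",
        OF powers]
    by simp
  then show ?thesis unfolding expand[of w] expand[of "\<lambda>k. V *v w k"] by simp
qed

section \<open>Orthogonal diagonalization of symmetric matrices\<close>

lemma compact_orthogonal_matrices: "compact {V::real^'n^'n. orthogonal_matrix V}"
  unfolding compact_eq_bounded_closed
proof
  show "bounded {V::real^'n^'n. orthogonal_matrix V}"
    unfolding bounded_iff
  proof (intro exI ballI)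
    fix V :: "real^'n^'n" assume "V \<in> {V. orthogonal_matrix V}"
    then have "norm (row i V) = 1" for i by (simp add: orthogonal_matrix_orthonormal_rows)
    moreover have "row i V = V $ i" for i by (simp add: row_def vec_eq_iff)
    ultimately have rows: "norm (V $ i) = 1" for i by metis
    have "norm V = L2_set (\<lambda>i. norm (V $ i)) UNIV" by (rule norm_vec_def)
    also have "\<dots> \<le> (\<Sum>i\<in>UNIV. norm (V $ i))" by (rule L2_set_le_sum) auto
    finally show "norm V \<le> real CARD('n)" using rows by simp
  qed
  have "continuous_on UNIV (\<lambda>V::real^'n^'n. transpose V ** V)"
    unfolding matrix_matrix_mult_def transpose_def by (intro continuous_intros)
  then have "closed {V::real^'n^'n. transpose V ** V = mat 1}"
    by (rule closed_Collect_eq[OF _ continuous_on_const])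
  then show "closed {V::real^'n^'n. orthogonal_matrix V}" by (simp add: orthogonal_matrix)
qed

lemma sum_two_deltas:
  fixes f g :: "'n::finite \<Rightarrow> real"
  assumes "i \<noteq> j"
  shows "(\<Sum>k\<in>UNIV. (if k = i then f k else if k = j then g k else 0)) = f i + g j"
proof -
  have "(\<Sum>k\<in>UNIV. (if k = i then f k else if k = j then g k else 0))
      = (\<Sum>k\<in>UNIV. (if k = i then f k else 0) + (if k = j then g k else 0))"
    by (rule sum.cong) (use assms in auto)
  then show ?thesis by (simp add: sum.distrib)
qed

definition givens_rotation :: "'n \<Rightarrow> 'n \<Rightarrow> real \<Rightarrow> real \<Rightarrow> real^'n^'n" where
  "givens_rotation i j c s = (\<chi> k a.
     if a = i then (if k = i then c else if k = j then s else 0)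
     else if a = j then (if k = i then - s else if k = j then c else 0)
     else if k = a then 1 else 0)"

lemma givens_rotation_column_sum:
  fixes X :: "'n::finite \<Rightarrow> real"
  assumes "i \<noteq> j"
  shows "(\<Sum>k\<in>UNIV. givens_rotation i j c s $ k $ a * X k) =
    (if a = i then c * X i + s * X j else if a = j then - s * X i + c * X j else X a)"
proof -
  consider "a = i" | "a = j" | "a \<noteq> i" "a \<noteq> j" by blast
  then show ?thesis
  proof cases
    case 1
    have "(\<Sum>k\<in>UNIV. givens_rotation i j c s $ k $ a * X k)
        = (\<Sum>k\<in>UNIV. (if k = i then c * X k else if k = j then s * X k else 0))"
      by (rule sum.cong) (auto simp: givens_rotation_def 1)
    then show ?thesis using assms 1 by (simp add: sum_two_deltas)
  next
    case 2
    have "(\<Sum>k\<in>UNIV. givens_rotation i j c s $ k $ a * X k)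
        = (\<Sum>k\<in>UNIV. (if k = i then - s * X k else if k = j then c * X k else 0))"
      by (rule sum.cong) (use assms in \<open>auto simp: givens_rotation_def 2\<close>)
    then show ?thesis using assms 2 by (simp add: sum_two_deltas)
  next
    case 3
    have "(\<Sum>k\<in>UNIV. givens_rotation i j c s $ k $ a * X k) = (\<Sum>k\<in>UNIV. (if k = a then X k else 0))"
      by (rule sum.cong) (use 3 in \<open>auto simp: givens_rotation_def\<close>)
    then show ?thesis using 3 by simp
  qed
qed

lemma orthogonal_matrix_givens_rotation:
  assumes "i \<noteq> j" "c\<^sup>2 + s\<^sup>2 = 1"
  shows "orthogonal_matrix (givens_rotation i j c s)"
  unfolding orthogonal_matrix
proof -
  have "(transpose (givens_rotation i j c s) ** givens_rotation i j c s) $ a $ b = mat 1 $ a $ b" for a b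
  proof -
    have "(transpose (givens_rotation i j c s) ** givens_rotation i j c s) $ a $ b
        = (\<Sum>k\<in>UNIV. givens_rotation i j c s $ k $ a * givens_rotation i j c s $ k $ b)"
      by (simp add: matrix_matrix_mult_def transpose_def)
    also have "\<dots> = mat 1 $ a $ b"
      unfolding givens_rotation_column_sum[OF assms(1)]
      using assms by (auto simp: givens_rotation_def mat_def power2_eq_square algebra_simps)
    finally show ?thesis .
  qed
  then show "transpose (givens_rotation i j c s) ** givens_rotation i j c s = mat 1"
    by (simp add: vec_eq_iff)
qed

lemma givens_rotation_conjugate_diagonal:
  fixes B :: "real^'n^'n"
  assumes "i \<noteq> j" and "transpose B = B"
  shows "(transpose (givens_rotation i j c s) ** B ** givens_rotation i j c s) $ a $ a =
    (if a = i then c\<^sup>2 * B$i$i + 2 * c * s * B$i$j + s\<^sup>2 * B$j$j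
     else if a = j then s\<^sup>2 * B$i$i - 2 * c * s * B$i$j + c\<^sup>2 * B$j$j else B$a$a)"
proof -
  have "B$j$i = B$i$j" using assms(2) by (metis transpose_def vec_lambda_beta)
  moreover have "(transpose (givens_rotation i j c s) ** B ** givens_rotation i j c s) $ a $ a =
      (\<Sum>l\<in>UNIV. givens_rotation i j c s $ l $ a *
                   (\<Sum>k\<in>UNIV. givens_rotation i j c s $ k $ a * B$k$l))"
    by (simp add: matrix_matrix_mult_def transpose_def mult.commute)
  ultimately show ?thesis
    unfolding givens_rotation_column_sum[OF assms(1)] using assms(1)
    by (simp add: power2_eq_square algebra_simps)
qed

lemma givens_angle_exists:
  fixes b e :: real
  shows "\<exists>c s. c\<^sup>2 + s\<^sup>2 = 1 \<and> (c\<^sup>2 - s\<^sup>2) * b + c * s * e = 0"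
proof -
  obtain t where t: "cos t * b + sin t * (e / 2) = 0"
  proof (cases "b = 0 \<and> e = 0")
    case True
    then show ?thesis using that[of 0] by simp
  next
    case False
    define r where "r = sqrt (b\<^sup>2 + (e / 2)\<^sup>2)"
    have "(- (e / 2) / r)\<^sup>2 + (b / r)\<^sup>2 = (b\<^sup>2 + (e / 2)\<^sup>2) / r\<^sup>2"
      by (simp only: power_divide power2_minus add_divide_distrib add.commute)
    also have "\<dots> = 1" using False by (auto simp: r_def)
    finally have "(- (e / 2) / r)\<^sup>2 + (b / r)\<^sup>2 = 1" .
    then obtain t where "cos t = - (e / 2) / r" "sin t = b / r"
      using sincos_total_2pi by metis
    then have "cos t * b + sin t * (e / 2) = 0" by (simp add: field_simps)
    then show ?thesis by (rule that)
  qed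
  show ?thesis
  proof (intro exI conjI)
    show "(cos (t / 2))\<^sup>2 + (sin (t / 2))\<^sup>2 = 1" by simp
    show "((cos (t / 2))\<^sup>2 - (sin (t / 2))\<^sup>2) * b + cos (t / 2) * sin (t / 2) * e = 0"
    proof -
      have double: "cos t = (cos (t / 2))\<^sup>2 - (sin (t / 2))\<^sup>2" "sin t = 2 * sin (t / 2) * cos (t / 2)"
        using cos_double[of "t / 2"] sin_double[of "t / 2"] by simp_all
      show ?thesis using t[unfolded double] by (simp add: algebra_simps)
    qed
  qed
qed

text \<open>Jacobi's argument: an orthogonal \<open>V\<close> maximizing the sum of squares of the diagonal entries of
  \<open>V\<^sup>T A V\<close> exists by compactness, and a Givens rotation annihilating a nonzero off-diagonal entry
  \<open>b\<close> would increase that sum by \<open>2 b\<^sup>2\<close>.\<close>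
lemma symmetric_matrix_diagonalizable:
  fixes A :: "real^'n^'n"
  assumes "transpose A = A"
  shows "\<exists>V. orthogonal_matrix V \<and> (\<forall>i j. i \<noteq> j \<longrightarrow> (transpose V ** A ** V) $ i $ j = 0)"
proof -
  define D where "D V = (\<Sum>a\<in>UNIV. ((transpose V ** A ** V) $ a $ a)\<^sup>2)" for V :: "real^'n^'n"
  have "continuous_on {V. orthogonal_matrix V} D"
    unfolding D_def matrix_matrix_mult_def transpose_def by (intro continuous_intros)
  then obtain V0 where V0: "orthogonal_matrix V0"
    and max: "\<And>V. orthogonal_matrix V \<Longrightarrow> D V \<le> D V0"
    using continuous_attains_sup[OF compact_orthogonal_matrices] orthogonal_matrix_id by blast
  define B where "B = transpose V0 ** A ** V0"
  have symB: "transpose B = B"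
    unfolding B_def by (simp add: matrix_transpose_mul assms matrix_mul_assoc)
  have "B $ i $ j = 0" if ij: "i \<noteq> j" for i j
  proof (rule ccontr)
    assume b: "B $ i $ j \<noteq> 0"
    obtain c s where cs: "c\<^sup>2 + s\<^sup>2 = 1"
      and annihilate: "(c\<^sup>2 - s\<^sup>2) * B$i$j + c * s * (B$j$j - B$i$i) = 0"
      using givens_angle_exists by blast
    define R where "R = givens_rotation i j c s"
    define V1 where "V1 = V0 ** R"
    have "orthogonal_matrix V1"
      unfolding V1_def R_def by (intro orthogonal_matrix_mul V0 orthogonal_matrix_givens_rotation ij cs)
    have "transpose V1 ** A ** V1 = transpose R ** B ** R"
      unfolding V1_def B_def by (simp add: matrix_transpose_mul matrix_mul_assoc)
    then have "D V1 - D V0 = (\<Sum>a\<in>UNIV. ((transpose R ** B ** R) $ a $ a)\<^sup>2 - (B $ a $ a)\<^sup>2)"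
      unfolding D_def B_def by (simp add: sum_subtractf)
    also have "\<dots> = (c\<^sup>2 * B$i$i + 2 * c * s * B$i$j + s\<^sup>2 * B$j$j)\<^sup>2 - (B$i$i)\<^sup>2
        + ((s\<^sup>2 * B$i$i - 2 * c * s * B$i$j + c\<^sup>2 * B$j$j)\<^sup>2 - (B$j$j)\<^sup>2)"
      unfolding R_def givens_rotation_conjugate_diagonal[OF ij symB]
      using sum_two_deltas[OF ij] by (simp add: if_distrib[of "\<lambda>x. x\<^sup>2 - _"] cong: if_cong)
    also have "\<dots> = 2 * (B$i$j)\<^sup>2"
    proof -
      have "(c\<^sup>2 * x + 2 * c * s * b + s\<^sup>2 * y)\<^sup>2 + (s\<^sup>2 * x - 2 * c * s * b + c\<^sup>2 * y)\<^sup>2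
          + 2 * ((c\<^sup>2 - s\<^sup>2) * b + c * s * (y - x))\<^sup>2 = (c\<^sup>2 + s\<^sup>2)\<^sup>2 * (x\<^sup>2 + y\<^sup>2 + 2 * b\<^sup>2)"
        for x y b :: real
        by algebra
      from this[of "B$i$i" "B$i$j" "B$j$j"] show ?thesis using cs annihilate by simp
    qed
    finally have "D V1 - D V0 = 2 * (B$i$j)\<^sup>2" .
    moreover have "(B$i$j)\<^sup>2 > 0" using b by simp
    ultimately have "D V1 > D V0" by linarith
    then show False using max[OF \<open>orthogonal_matrix V1\<close>] by simp
  qed
  then show ?thesis using V0 unfolding B_def by blast
qed

section \<open>Eigenvalue lists\<close>

lemma prod_linear_factors_eq_imp_bij:
  fixes a :: "'i \<Rightarrow> 'a::idom" and b :: "'j \<Rightarrow> 'a"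
  assumes "finite I" "finite J" "(\<Prod>i\<in>I. [:- a i, 1:]) = (\<Prod>j\<in>J. [:- b j, 1:])"
  shows "\<exists>\<sigma>. bij_betw \<sigma> I J \<and> (\<forall>i\<in>I. a i = b (\<sigma> i))"
  using assms
proof (induction I arbitrary: J rule: finite_induct)
  case empty
  have "J = {}"
  proof (rule ccontr)
    assume "J \<noteq> {}"
    then obtain k where "k \<in> J" by blast
    then have "poly (\<Prod>j\<in>J. [:- b j, 1:]) (b k) = 0"
      using empty.prems(1) by (auto simp: poly_prod prod_zero_iff)
    then show False using empty.prems(2) by simp
  qed
  then show ?case by (simp add: bij_betw_def)
next
  case (insert i I)
  have "poly (\<Prod>j\<in>J. [:- b j, 1:]) (a i) = 0"
    unfolding insert.prems(2)[symmetric] using insert.hyps by (simp add: poly_prod)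
  then obtain k where k: "k \<in> J" "b k = a i"
    using insert.prems(1) by (auto simp: poly_prod prod_zero_iff)
  have "[:- a i, 1:] * (\<Prod>i\<in>I. [:- a i, 1:]) = [:- a i, 1:] * (\<Prod>j\<in>J - {k}. [:- b j, 1:])"
    using insert prod.remove[OF insert.prems(1) k(1), of "\<lambda>j. [:- b j, 1:]"] k(2) by simp
  then have "(\<Prod>i\<in>I. [:- a i, 1:]) = (\<Prod>j\<in>J - {k}. [:- b j, 1:])"
    by (rule mult_left_cancel[THEN iffD1, rotated]) simp
  then obtain \<sigma> where \<sigma>: "bij_betw \<sigma> I (J - {k})" "\<forall>i\<in>I. a i = b (\<sigma> i)"
    using insert.IH insert.prems(1) by blast
  show ?case
  proof (intro exI conjI)
    show "bij_betw (\<sigma>(i := k)) (insert i I) J"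
      using \<sigma>(1) k(1) insert.hyps(2) unfolding bij_betw_def inj_on_def by (auto simp: image_iff)
    show "\<forall>i'\<in>insert i I. a i' = b ((\<sigma>(i := k)) i')"
      using \<sigma>(2) k(2) insert.hyps(2) by auto
  qed
qed

lemma prod_linear_factors_eq_imp_permutes:
  fixes lam mu :: "real^'n"
  assumes "\<And>t. (\<Prod>i\<in>UNIV. t - lam $ i) = (\<Prod>i\<in>UNIV. t - mu $ i)"
  shows "\<exists>\<sigma>. \<sigma> permutes (UNIV :: 'n set) \<and> lam = (\<chi> i. mu $ \<sigma> i)"
proof -
  have "poly (\<Prod>i\<in>UNIV. [:- lam $ i, 1:]) = poly (\<Prod>i\<in>UNIV. [:- mu $ i, 1:])"
    using assms by (simp add: poly_prod fun_eq_iff)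
  then have "(\<Prod>i\<in>UNIV. [:- lam $ i, 1:]) = (\<Prod>i\<in>UNIV. [:- mu $ i, 1:])"
    by (simp add: poly_eq_poly_eq_iff)
  then obtain \<sigma> where "bij_betw \<sigma> (UNIV::'n set) UNIV" "\<forall>i. lam $ i = mu $ \<sigma> i"
    using prod_linear_factors_eq_imp_bij[of UNIV UNIV "\<lambda>i. lam $ i" "\<lambda>i. mu $ i"] by auto
  then show ?thesis by (intro exI[of _ \<sigma>]) (auto intro!: bij_imp_permutes simp: vec_eq_iff)
qed

lemma matrix_diff_ldistrib: "(A::'a::ring_1^'n^'m) ** (B - C) = A ** B - A ** C"
  by (simp add: matrix_matrix_mult_def vec_eq_iff sum_subtractf algebra_simps)

lemma matrix_diff_rdistrib: "((B::'a::ring_1^'n^'m) - C) ** A = B ** A - C ** A"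
  by (simp add: matrix_matrix_mult_def vec_eq_iff sum_subtractf algebra_simps)

lemma det_orthogonal_conjugate_char:
  fixes A V :: "real^'n^'n"
  assumes "orthogonal_matrix V"
  shows "det (t *\<^sub>R mat 1 - transpose V ** A ** V) = det (t *\<^sub>R mat 1 - A)"
proof -
  have "t *\<^sub>R mat 1 - transpose V ** A ** V = transpose V ** (t *\<^sub>R mat 1 - A) ** V"
    using assms
    by (simp add: orthogonal_matrix matrix_diff_ldistrib matrix_diff_rdistrib matrix_scalar_ac
        scalar_matrix_assoc[symmetric])
  then have "det (t *\<^sub>R mat 1 - transpose V ** A ** V) = det (t *\<^sub>R mat 1 - A) * (det V * det V)"
    by (simp add: det_mul det_transpose)
  also have "det V * det V = 1" using det_orthogonal_matrix[OF assms] by auto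
  finally show ?thesis by simp
qed

lemma eigenvalue_list_permutes_diagonal:
  fixes A V :: "real^'n^'n"
  assumes "is_eigenvalue_list A lam" and "orthogonal_matrix V"
    and diagonal: "\<forall>i j. i \<noteq> j \<longrightarrow> (transpose V ** A ** V) $ i $ j = 0"
  shows "\<exists>\<sigma>. \<sigma> permutes (UNIV :: 'n set) \<and> lam = (\<chi> i. (transpose V ** A ** V) $ \<sigma> i $ \<sigma> i)"
proof -
  let ?M = "transpose V ** A ** V"
  have "(\<Prod>i\<in>UNIV. t - lam $ i) = (\<Prod>i\<in>UNIV. t - (\<chi> i. ?M $ i $ i) $ i)" for t
  proof -
    have "(\<Prod>i\<in>UNIV. t - lam $ i) = det (t *\<^sub>R mat 1 - ?M)"
      using assms(1,2) by (simp add: is_eigenvalue_list_def det_orthogonal_conjugate_char)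
    also have "\<dots> = (\<Prod>i\<in>UNIV. (t *\<^sub>R mat 1 - ?M) $ i $ i)"
      by (rule det_diagonal) (use diagonal in \<open>simp add: mat_def\<close>)
    finally show ?thesis by (simp add: mat_def)
  qed
  then obtain \<sigma> where "\<sigma> permutes UNIV" "lam = (\<chi> i. (\<chi> i. ?M $ i $ i) $ \<sigma> i)"
    using prod_linear_factors_eq_imp_permutes by blast
  then show ?thesis by auto
qed

lemma inner_gram_matrix: "y \<bullet> (gram n T *v y) = (\<Sum>k<n. (T k \<bullet> y)\<^sup>2)"
proof -
  have "y \<bullet> (gram n T *v y) = (\<Sum>i\<in>UNIV. \<Sum>j\<in>UNIV. \<Sum>k<n. (T k $ i * y $ i) * (T k $ j * y $ j))"
    by (simp add: inner_vec_def matrix_vector_mult_def gram_def sum_distrib_left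
        sum_distrib_right ac_simps)
  also have "\<dots> = (\<Sum>k<n. \<Sum>i\<in>UNIV. \<Sum>j\<in>UNIV. (T k $ i * y $ i) * (T k $ j * y $ j))"
    by (simp add: sum.swap[of _ "{..<n}"])
  also have "\<dots> = (\<Sum>k<n. (T k \<bullet> y)\<^sup>2)"
    by (simp add: inner_vec_def power2_eq_square sum_product)
  finally show ?thesis .
qed

lemma transpose_gram: "transpose (gram n T) = gram n T"
  by (simp add: gram_def transpose_def mult.commute)

lemma inner_diagonal_matrix:
  assumes "\<forall>i j. i \<noteq> j \<longrightarrow> M $ i $ j = 0"
  shows "z \<bullet> (M *v z) = (\<Sum>i\<in>UNIV. M $ i $ i * (z $ i)\<^sup>2)"
proof -
  have "(M *v z) $ i = M $ i $ i * z $ i" for i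
  proof -
    have "(M *v z) $ i = (\<Sum>j\<in>UNIV. if j = i then M $ i $ j * z $ j else 0)"
      unfolding matrix_vector_mult_def vec_lambda_beta by (rule sum.cong) (use assms in auto)
    then show ?thesis by simp
  qed
  then show ?thesis by (simp add: inner_vec_def power2_eq_square ac_simps)
qed

lemma permutation_matrix:
  assumes "\<tau> permutes (UNIV :: 'n set)"
  defines "P \<equiv> (\<chi> a b. if a = \<tau> b then 1 else 0) :: real^'n^'n"
  shows "orthogonal_matrix P" "P *v axis i 1 = axis (\<tau> i) 1"
proof -
  have inj: "\<tau> b = \<tau> c \<longleftrightarrow> b = c" for b c using assms(1) by (metis permutes_inj injD)
  have "(transpose P ** P) $ b $ c = mat 1 $ b $ c" for b c
  proof -
    have "(transpose P ** P) $ b $ c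
        = (\<Sum>k\<in>UNIV. (if k = \<tau> b then 1 else 0) * (if k = \<tau> c then 1 else 0))"
      by (simp add: P_def matrix_matrix_mult_def transpose_def)
    also have "\<dots> = (\<Sum>k\<in>UNIV. if k = \<tau> b then (if \<tau> b = \<tau> c then 1 else 0) else 0)"
      by (rule sum.cong) auto
    finally show ?thesis by (simp add: inj mat_def)
  qed
  then show "orthogonal_matrix P" unfolding orthogonal_matrix by (simp add: vec_eq_iff)
  have "(P *v axis i 1) $ a = axis (\<tau> i) 1 $ a" for a
  proof -
    have "(P *v axis i 1) $ a = (\<Sum>b\<in>UNIV. (if a = \<tau> b then 1 else 0) * (if b = i then 1 else 0))"
      by (simp add: P_def matrix_vector_mult_def axis_def)
    also have "\<dots> = (\<Sum>b\<in>UNIV. if b = i then (if a = \<tau> i then 1 else 0) else 0)"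
      by (rule sum.cong) auto
    finally show ?thesis by (simp add: axis_def)
  qed
  then show "P *v axis i 1 = axis (\<tau> i) 1" by (simp add: vec_eq_iff)
qed

lemma norm_orthogonal_matrix_vector:
  fixes V :: "real^'n^'n"
  assumes "orthogonal_matrix V"
  shows "norm (V *v x) = norm x"
  using assms
  by (metis matrix_of_matrix_vector_mul matrix_vector_mul_linear orthogonal_transformation_matrix
      orthogonal_transformation_norm)

lemma sum_squares_diagonalized_gram:
  assumes "\<forall>i j. i \<noteq> j \<longrightarrow> (transpose V ** gram n T ** V) $ i $ j = 0"
  shows "(\<Sum>k<n. ((transpose V *v T k) \<bullet> z)\<^sup>2)
       = (\<Sum>i\<in>UNIV. (transpose V ** gram n T ** V) $ i $ i * (z $ i)\<^sup>2)"
proof -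
  have "(\<Sum>k<n. ((transpose V *v T k) \<bullet> z)\<^sup>2) = (\<Sum>k<n. (T k \<bullet> (V *v z))\<^sup>2)"
    by (simp add: dot_lmul_matrix)
  also have "\<dots> = (V *v z) \<bullet> (gram n T *v (V *v z))" by (rule inner_gram_matrix[symmetric])
  also have "\<dots> = z \<bullet> ((transpose V ** gram n T ** V) *v z)"
    by (metis dot_lmul_matrix inner_commute matrix_vector_mul_assoc transpose_matrix_vector)
  also have "\<dots> = (\<Sum>i\<in>UNIV. (transpose V ** gram n T ** V) $ i $ i * (z $ i)\<^sup>2)"
    by (rule inner_diagonal_matrix[OF assms])
  finally show ?thesis .
qed

section \<open>Groups whose invariant forms of degree \<open>2p\<close> are radial\<close>

locale radial_invariants_group =
  fixes G :: "(real^'d^'d) set" and p :: nat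
  assumes group: "finite_orth_group G"
    and radial_invariants: "\<forall>f. homog_poly (2 * p) f \<and> (\<forall>U\<in>G. \<forall>x. f (U *v x) = f x)
              \<longrightarrow> (\<exists>c. \<forall>x. f x = c * norm x ^ (2 * p))"
begin

lemma finite_G: "finite G"
  using group by (simp add: finite_orth_group_def)

lemma card_G_pos: "card G > 0"
  using group by (auto simp: finite_orth_group_def card_gt_0_iff)

lemma sum_G_mult_right:
  assumes "W \<in> G"
  shows "(\<Sum>U\<in>G. h (U ** W)) = (\<Sum>U\<in>G. h U)"
proof (rule sum.reindex_bij_witness[of _ "\<lambda>U. U ** transpose W" "\<lambda>U. U ** W"])
  have "orthogonal_matrix W" using group assms by (simp add: finite_orth_group_def)
  then have W: "W ** transpose W = mat 1" "transpose W ** W = mat 1"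
    unfolding orthogonal_matrix_def by auto
  fix U assume "U \<in> G"
  then show "U ** transpose W ** W = U" "U ** W ** transpose W = U"
    "U ** transpose W \<in> G" "U ** W \<in> G"
    using group assms by (auto simp: matrix_mul_assoc[symmetric] W finite_orth_group_def)
qed simp

lemma sum_G_transpose: "(\<Sum>U\<in>G. h (transpose U)) = (\<Sum>U\<in>G. h U)"
  by (rule sum.reindex_bij_witness[of _ transpose transpose])
     (use group in \<open>auto simp: finite_orth_group_def\<close>)

lemma orbit_sum_radial:
  assumes "homog_poly (2 * p) \<phi>"
  shows "\<exists>c. \<forall>x. (\<Sum>U\<in>G. \<phi> (U *v x)) = c * norm x ^ (2 * p)"
proof -
  have "homog_poly (2 * p) (\<lambda>x. \<Sum>U\<in>G. \<phi> (U *v x))"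
    by (intro homog_poly_sum homog_poly_compose_matrix assms finite_G)
  moreover have "(\<Sum>U\<in>G. \<phi> (U *v (W *v x))) = (\<Sum>U\<in>G. \<phi> (U *v x))" if "W \<in> G" for W x
    using sum_G_mult_right[OF that, of "\<lambda>U. \<phi> (U *v x)"] by (simp add: matrix_vector_mul_assoc)
  ultimately show ?thesis using radial_invariants by blast
qed

lemma orbit_sum_power_inner:
  "\<exists>\<kappa>. \<forall>x y. (\<Sum>U\<in>G. (y \<bullet> (U *v x)) ^ (2 * p)) = \<kappa> * norm y ^ (2 * p) * norm x ^ (2 * p)"
proof -
  have "\<exists>c. \<forall>x. (\<Sum>U\<in>G. (y \<bullet> (U *v x)) ^ (2 * p)) = c * norm x ^ (2 * p)" for y
    using orbit_sum_radial homog_poly_power[OF homog_poly_inner[of y], where m = "2 * p"] by simp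
  then obtain c where c: "\<And>x y. (\<Sum>U\<in>G. (y \<bullet> (U *v x)) ^ (2 * p)) = c y * norm x ^ (2 * p)"
    by metis
  have swap: "c y * norm x ^ (2 * p) = c x * norm y ^ (2 * p)" for x y
  proof -
    have "c y * norm x ^ (2 * p) = (\<Sum>U\<in>G. (y \<bullet> (transpose U *v x)) ^ (2 * p))"
      using sum_G_transpose[of "\<lambda>U. (y \<bullet> (U *v x)) ^ (2 * p)"] c by simp
    also have "\<dots> = (\<Sum>U\<in>G. (x \<bullet> (U *v y)) ^ (2 * p))"
      by (intro sum.cong refl) (metis dot_lmul_matrix inner_commute transpose_matrix_vector)
    finally show ?thesis using c by simp
  qed
  define e :: "real^'d" where "e = axis undefined 1"
  have "(\<Sum>U\<in>G. (y \<bullet> (U *v x)) ^ (2 * p)) = c e * norm y ^ (2 * p) * norm x ^ (2 * p)" for x y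
    using c[where x = x and y = y] swap[of y e] by (simp add: e_def)
  then show ?thesis by blast
qed

lemma orbit_sum_power_inner_rotate:
  assumes "orthogonal_matrix V"
  shows "(\<Sum>U\<in>G. ((V *v y) \<bullet> (U *v x)) ^ (2 * p)) = (\<Sum>U\<in>G. (y \<bullet> (U *v x)) ^ (2 * p))"
proof -
  obtain \<kappa> where "\<And>x y. (\<Sum>U\<in>G. (y \<bullet> (U *v x)) ^ (2 * p)) = \<kappa> * norm y ^ (2 * p) * norm x ^ (2 * p)"
    using orbit_sum_power_inner by blast
  then show ?thesis by (simp add: norm_orthogonal_matrix_vector[OF assms])
qed

lemma orbit_sum_weighted_squares_rotate:
  assumes "orthogonal_matrix V" and "finite K"
  shows "(\<Sum>U\<in>G. (\<Sum>k\<in>K. s k * ((V *v w k) \<bullet> (U *v x))\<^sup>2) ^ p)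
       = (\<Sum>U\<in>G. (\<Sum>k\<in>K. s k * (w k \<bullet> (U *v x))\<^sup>2) ^ p)"
  using sum_power_weighted_squares_transform[OF orbit_sum_power_inner_rotate[OF assms(1)] assms(2)] .

definition weighted_moment :: "real^'d \<Rightarrow> real^'d \<Rightarrow> real" where
  "weighted_moment \<mu> x = (\<Sum>U\<in>G. (\<Sum>i\<in>UNIV. \<mu> $ i * ((U *v x) $ i)\<^sup>2) ^ p)"

definition moment_poly :: "real^'d \<Rightarrow> real" where
  "moment_poly \<mu> = weighted_moment \<mu> (axis undefined 1) / card G"

lemma weighted_moment_radial: "weighted_moment \<mu> x = card G * moment_poly \<mu> * norm x ^ (2 * p)"
proof -
  have "homog_poly 2 (\<lambda>z::real^'d. \<Sum>i\<in>UNIV. \<mu> $ i * (z $ i)\<^sup>2)"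
    using homog_poly_mult[OF homog_poly_component homog_poly_component]
    by (intro homog_poly_sum homog_poly_cmult) (simp_all add: power2_eq_square numeral_2_eq_2)
  then obtain c where c: "\<And>x. weighted_moment \<mu> x = c * norm x ^ (2 * p)"
    using orbit_sum_radial[OF homog_poly_power] unfolding weighted_moment_def by blast
  then have "c = card G * moment_poly \<mu>"
    using card_G_pos by (simp add: moment_poly_def)
  then show ?thesis using c by simp
qed

lemma homog_poly_moment_poly: "homog_poly p moment_poly"
proof -
  define a :: "real^'d^'d \<Rightarrow> real^'d"
    where "a U = (\<chi> i. ((U *v axis undefined 1) $ i)\<^sup>2)" for U
  have "moment_poly = (\<lambda>\<mu>. inverse (card G) * (\<Sum>U\<in>G. (a U \<bullet> \<mu>) ^ p))"
    by (simp add: fun_eq_iff moment_poly_def weighted_moment_def a_def inner_vec_def mult.commute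
        divide_inverse)
  moreover have "homog_poly p (\<lambda>\<mu>. inverse (card G) * (\<Sum>U\<in>G. (a U \<bullet> \<mu>) ^ p))"
    using homog_poly_power[OF homog_poly_inner, where m = p]
    by (intro homog_poly_cmult homog_poly_sum finite_G) simp
  ultimately show ?thesis by simp
qed

lemma weighted_moment_permute:
  assumes "\<sigma> permutes (UNIV :: 'd set)"
  shows "weighted_moment (\<chi> i. \<mu> $ \<sigma> i) x = weighted_moment \<mu> x"
proof -
  define P :: "real^'d^'d" where "P = (\<chi> a b. if a = inv \<sigma> b then 1 else 0)"
  have P: "orthogonal_matrix P" "\<And>i. P *v axis i 1 = axis (inv \<sigma> i) 1"
    using permutation_matrix[OF permutes_inv[OF assms]] unfolding P_def by auto
  have "weighted_moment \<mu> x = (\<Sum>U\<in>G. (\<Sum>i\<in>UNIV. \<mu> $ i * ((P *v axis i 1) \<bullet> (U *v x))\<^sup>2) ^ p)"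
    using orbit_sum_weighted_squares_rotate[OF P(1), of UNIV "\<lambda>i. \<mu> $ i" "\<lambda>i. axis i 1"]
    by (simp add: weighted_moment_def inner_axis')
  also have "\<dots> = (\<Sum>U\<in>G. (\<Sum>i\<in>UNIV. \<mu> $ i * ((U *v x) $ inv \<sigma> i)\<^sup>2) ^ p)"
    by (simp add: P(2) inner_axis')
  also have "\<dots> = (\<Sum>U\<in>G. (\<Sum>i\<in>UNIV. \<mu> $ \<sigma> i * ((U *v x) $ i)\<^sup>2) ^ p)"
    using sum.permute[OF assms, of "\<lambda>i. \<mu> $ i * ((_ *v x) $ inv \<sigma> i)\<^sup>2"]
    by (simp add: permutes_inverses(2)[OF assms])
  finally show ?thesis by (simp add: weighted_moment_def)
qed

lemma moment_poly_symmetric: "symmetric_fun moment_poly"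
  by (simp add: symmetric_fun_def moment_poly_def weighted_moment_permute)

lemma orbit_sum_rect_norm:
  assumes "is_eigenvalue_list (gram n T) lam"
  shows "(\<Sum>U\<in>G. rect_norm n T (U *v x) ^ (2 * p)) = card G * moment_poly lam * norm x ^ (2 * p)"
proof -
  obtain V where V: "orthogonal_matrix V"
    and diagonal: "\<forall>i j. i \<noteq> j \<longrightarrow> (transpose V ** gram n T ** V) $ i $ j = 0"
    using symmetric_matrix_diagonalizable[OF transpose_gram] by blast
  define \<mu> where "\<mu> = (\<chi> i. (transpose V ** gram n T ** V) $ i $ i)"
  obtain \<sigma> where \<sigma>: "\<sigma> permutes UNIV" "lam = (\<chi> i. \<mu> $ \<sigma> i)"
    using eigenvalue_list_permutes_diagonal[OF assms V diagonal] unfolding \<mu>_def by auto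
  have "(\<Sum>U\<in>G. rect_norm n T (U *v x) ^ (2 * p)) = (\<Sum>U\<in>G. (\<Sum>k<n. 1 * (T k \<bullet> (U *v x))\<^sup>2) ^ p)"
    by (simp add: rect_norm_def power_mult sum_nonneg)
  also have "\<dots> = (\<Sum>U\<in>G. (\<Sum>k<n. 1 * ((transpose V *v T k) \<bullet> (U *v x))\<^sup>2) ^ p)"
    using V by (intro orbit_sum_weighted_squares_rotate[symmetric]) simp_all
  also have "\<dots> = weighted_moment \<mu> x"
    unfolding mult_1 sum_squares_diagonalized_gram[OF diagonal] weighted_moment_def \<mu>_def by simp
  also have "\<dots> = weighted_moment lam x"
    using \<sigma> by (simp add: weighted_moment_permute)
  finally show ?thesis by (simp add: weighted_moment_radial)
qed

end

theorem corollary3p4: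
  fixes G :: "(real^'d^'d) set" and p :: nat
  assumes "finite_orth_group G"
    and "p \<ge> 1"
    and "\<forall>f. homog_poly (2 * p) f \<and> (\<forall>U\<in>G. \<forall>x. f (U *v x) = f x)
              \<longrightarrow> (\<exists>c. \<forall>x. f x = c * norm x ^ (2 * p))"
  shows "\<exists>F :: real^'d \<Rightarrow> real. homog_poly p F \<and> symmetric_fun F \<and>
           (\<forall>(n::nat) (T :: nat \<Rightarrow> real^'d) (x :: real^'d) lam.
              is_eigenvalue_list (gram n T) lam \<longrightarrow>
              (1 / real (card G)) * (\<Sum>U\<in>G. rect_norm n T (U *v x) ^ (2 * p))
                = F lam * norm x ^ (2 * p))"
proof -
  interpret radial_invariants_group G p
    using assms(1,3) by unfold_locales
  show ?thesis
    using homog_poly_moment_poly moment_poly_symmetric orbit_sum_rect_norm card_G_pos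
    by (intro exI[of _ moment_poly]) simp
qed

end
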